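(* Let $g:\mathbb{R}\to\mathbb{R}$ be $\pi$-periodic. Let $m,n$ be positive integers, $p=\gcd(m,n)$, and $r,q$ positive integers with $m=pq$, $n=pr$. Let $\mu=\pi/n$ and define $h(x)=\prod_{j=0}^{r-1} g(x+jm\mu)$. Then for all $x\in\mathbb{R}$, $$\prod_{k=1}^{p} h\big(x+(k-1)\mu\big)=\prod_{i=0}^{n-1} g(x+i\mu)\quad\text{and}\quad \prod_{i=0}^{n-1} g(x+mi\mu)=h(x)^p.$$ *)

theory Defs
  imports Complex_Main
begin

end

theory Submission
  imports Defs "HOL-Number_Theory.Cong"
begin

text \<open>Put \<open>G i = g (x + i\<mu>)\<close>; since \<open>n\<mu> = \<pi>\<close>, \<open>G\<close> is \<open>n\<close>-periodic, and every product in
  the statement is a product of values of \<open>G\<close>. As \<open>j\<close> runs over \<open>0..<r\<close>, the index \<open>jm = p(jq)\<close>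
  runs modulo \<open>n = pr\<close> through the multiples \<open>p s\<close>, \<open>s < r\<close>, exactly once each, because \<open>q\<close> and \<open>r\<close>
  are coprime. Hence \<open>h(x + k\<mu>) = \<Prod>\<^sub>s G (k + ps)\<close>, and the indices \<open>k + ps\<close> with \<open>k < p\<close>, \<open>s < r\<close>
  cover \<open>0..<n\<close> exactly once, which is the first identity. For the second, \<open>mi\<close> depends modulo \<open>n\<close>
  only on \<open>i mod r\<close>, so the \<open>n\<close> factors are \<open>p\<close> copies of the \<open>r\<close> factors of \<open>h x\<close>.\<close>

lemma periodic_add_mult:
  assumes "\<And>i. G (i + n) = G (i :: nat)"
  shows "G (i + c * n) = G i"
proof (induction c)
  case (Suc c)
  have "i + Suc c * n = (i + c * n) + n"
    by simp
  then show ?case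
    using assms[of "i + c * n"] Suc.IH by (simp only:)
qed simp

lemma bij_betw_mult_mod_lessThan:
  fixes q r :: nat
  assumes "coprime q r" and "r > 0"
  shows "bij_betw (\<lambda>j. j * q mod r) {..<r} {..<r}"
proof -
  have inj: "inj_on (\<lambda>j. j * q mod r) {..<r}"
  proof (rule inj_onI)
    fix a b assume "a \<in> {..<r}" "b \<in> {..<r}" "a * q mod r = b * q mod r"
    then show "a = b"
      using assms(1) cong_mult_rcancel_nat[of q r a b] by (simp add: cong_def coprime_commute)
  qed
  moreover have "(\<lambda>j. j * q mod r) ` {..<r} = {..<r}"
    using inj assms(2) by (intro card_subset_eq) (auto simp: card_image)
  ultimately show ?thesis
    by (simp add: bij_betw_def)
qed

lemma prod_lessThan_mult_eq_prod_residues: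
  fixes f :: "nat \<Rightarrow> 'a :: comm_monoid_mult"
  shows "(\<Prod>i < p * r. f i) = (\<Prod>k<p. \<Prod>s<r. f (k + p * s))"
proof -
  have "(\<Prod>i < p * r. f i) = (\<Prod>s<r. prod f {s * p..<s * p + p})"
    by (simp add: prod.nat_group mult.commute)
  also have "\<dots> = (\<Prod>s<r. \<Prod>k<p. f (k + p * s))"
  proof (rule prod.cong [OF refl])
    fix s
    show "prod f {s * p..<s * p + p} = (\<Prod>k<p. f (k + p * s))"
      using prod.shift_bounds_nat_ivl[of f 0 "s * p" p]
      by (simp add: atLeast0LessThan add.commute mult.commute)
  qed
  also have "\<dots> = (\<Prod>k<p. \<Prod>s<r. f (k + p * s))"
    by (rule prod.swap)
  finally show ?thesis .
qed

context
  fixes G :: "nat \<Rightarrow> 'a :: comm_monoid_mult" and p r :: nat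
  assumes periodic: "\<And>i. G (i + p * r) = G i"
begin

lemma prod_periodic_stride_coprime:
  assumes "coprime q r" and "r > 0"
  shows "(\<Prod>j<r. G (k + j * (p * q))) = (\<Prod>s<r. G (k + p * s))"
proof -
  have "G (k + j * (p * q)) = G (k + p * (j * q mod r))" for j
  proof -
    have "j * (p * q) = p * (j * q div r * r + j * q mod r)"
      unfolding div_mult_mod_eq by simp
    then have "k + j * (p * q) = k + p * (j * q mod r) + (j * q div r) * (p * r)"
      by (simp only: algebra_simps)
    then show ?thesis
      by (simp only: periodic_add_mult[of G "p * r", OF periodic])
  qed
  then have "(\<Prod>j<r. G (k + j * (p * q))) = (\<Prod>j<r. G (k + p * (j * q mod r)))"
    by simp
  also have "\<dots> = (\<Prod>s<r. G (k + p * s))"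
    using prod.reindex_bij_betw[OF bij_betw_mult_mod_lessThan[OF assms]] by simp
  finally show ?thesis .
qed

lemma prod_residues_periodic_stride_coprime:
  assumes "coprime q r" and "r > 0"
  shows "(\<Prod>k<p. \<Prod>j<r. G (k + j * (p * q))) = (\<Prod>i < p * r. G i)"
  using prod_periodic_stride_coprime[OF assms] by (simp add: prod_lessThan_mult_eq_prod_residues)

lemma prod_periodic_stride_multiple:
  "(\<Prod>i < p * r. G (p * q * i)) = (\<Prod>s<r. G (s * (p * q))) ^ p"
proof -
  have "G (p * q * (s + r * a)) = G (s * (p * q))" for s a
  proof -
    have "p * q * (s + r * a) = s * (p * q) + (q * a) * (p * r)"
      by (simp add: algebra_simps)
    then show ?thesis
      by (simp only: periodic_add_mult[of G "p * r", OF periodic])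
  qed
  then have "(\<Prod>i < p * r. G (p * q * i)) = (\<Prod>s<r. \<Prod>a<p. G (s * (p * q)))"
    using prod_lessThan_mult_eq_prod_residues[of "\<lambda>i. G (p * q * i)" r p]
    by (simp add: mult.commute)
  also have "\<dots> = (\<Prod>a<p. \<Prod>s<r. G (s * (p * q)))"
    by (rule prod.swap)
  also have "\<dots> = (\<Prod>s<r. G (s * (p * q))) ^ p"
    by simp
  finally show ?thesis .
qed

end

theorem lemma4p1:
  fixes g :: "real \<Rightarrow> real" and m n p q r :: nat and \<mu> :: real and h :: "real \<Rightarrow> real"
  assumes per: "\<And>x. g (x + pi) = g x"
    and "m > 0" and "n > 0"
    and "p = gcd m n"
    and "q > 0" and "r > 0" and "m = p * q" and "n = p * r"
    and "\<mu> = pi / real n"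
    and "h = (\<lambda>x. \<Prod>j = 0..<r. g (x + real j * real m * \<mu>))"
  shows "\<forall>x. (\<Prod>k = 1..p. h (x + (real k - 1) * \<mu>)) = (\<Prod>i = 0..<n. g (x + real i * \<mu>))
           \<and> (\<Prod>i = 0..<n. g (x + real m * real i * \<mu>)) = h x ^ p"
proof
  fix x
  define G where "G i = g (x + real i * \<mu>)" for i
  have periodic: "G (i + p * r) = G i" for i
  proof -
    have "x + real (i + p * r) * \<mu> = (x + real i * \<mu>) + pi"
      using assms(3,8,9) by (simp add: algebra_simps)
    then show ?thesis
      unfolding G_def by (simp only: per)
  qed
  have h_shift: "h (x + real k * \<mu>) = (\<Prod>j<r. G (k + j * (p * q)))" for k
    unfolding assms(7,10) G_def atLeast0LessThan by (simp add: algebra_simps)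
  have "p > 0"
    using assms(2,4) by simp
  moreover have "p * gcd q r = p"
    using assms(4,7,8) by (simp add: gcd_mult_distrib_nat)
  ultimately have "coprime q r"
    by (simp add: coprime_iff_gcd_eq_1)
  have "(\<Prod>k = 1..p. h (x + (real k - 1) * \<mu>)) = (\<Prod>k<p. \<Prod>j<r. G (k + j * (p * q)))"
    by (simp add: prod.atLeast1_atMost_eq h_shift)
  also have "\<dots> = (\<Prod>i < p * r. G i)"
    using prod_residues_periodic_stride_coprime[of G p r q, OF periodic \<open>coprime q r\<close> assms(6)] .
  also have "\<dots> = (\<Prod>i = 0..<n. g (x + real i * \<mu>))"
    unfolding G_def assms(8) atLeast0LessThan ..
  moreover have "(\<Prod>i = 0..<n. g (x + real m * real i * \<mu>)) = (\<Prod>i < p * r. G (p * q * i))"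
    unfolding G_def assms(7,8) atLeast0LessThan by (simp add: mult.assoc)
  moreover have "\<dots> = h x ^ p"
    using prod_periodic_stride_multiple[of G p r q, OF periodic] h_shift[of 0] by simp
  ultimately show "(\<Prod>k = 1..p. h (x + (real k - 1) * \<mu>)) = (\<Prod>i = 0..<n. g (x + real i * \<mu>))
           \<and> (\<Prod>i = 0..<n. g (x + real m * real i * \<mu>)) = h x ^ p"
    by simp
qed

end
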